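(* Let $m$ be an integer. (i) If $m=N_1(1+(x-1)^3h(x))$ for some $h\in\mathbb Z[x]$ with $5\nmid h(1)$, then there is $F\in\mathbb Z[x]$ with $M_{25}(F)=5^3m$, $F(1)=N_2(F)=5$ and $N_1(F)=5m$. (ii) If $m=N_2(1+(x-1)^3h(x))$ for some $h\in\mathbb Z[x]$ with $5\nmid h(1)$, then there is $F\in\mathbb Z[x]$ with $M_{25}(F)=5^3m$, $F(1)=N_1(F)=5$ and $N_2(F)=5m$.
   Context: $M_{25}(F)=\prod_{z^{25}=1}F(z)$. For $k\geq1$, $\omega_k=e^{2\pi i/5^k}$ and $N_k(F)=\prod_{1\leq j\leq 5^k,\ 5\nmid j}F(\omega_k^j)$. *)

theory Defs
  imports "HOL-Analysis.Analysis" "HOL-Computational_Algebra.Polynomial"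
begin

definition cpoly :: "int poly \<Rightarrow> complex \<Rightarrow> complex" where
  "cpoly F z = poly (map_poly of_int F) z"

definition M25 :: "int poly \<Rightarrow> complex" where
  "M25 F = (\<Prod>z\<in>{z::complex. z ^ 25 = 1}. cpoly F z)"

definition omega :: "nat \<Rightarrow> complex" where
  "omega k = exp (2 * pi * \<i> / of_nat (5 ^ k))"

definition Nk :: "nat \<Rightarrow> int poly \<Rightarrow> complex" where
  "Nk k F = (\<Prod>j\<in>{j\<in>{1..5 ^ k}. \<not> (5::nat) dvd j}. cpoly F (omega k ^ j))"

end

(*
  Since M_25(F) = F(1) N_1(F) N_2(F) and N_k(F) only sees the values of F at the primitive
  5^k-th roots of unity, i.e. F modulo the cyclotomic polynomial Phi_(5^k), the two parts are
  Chinese-remainder constructions. Write G = 1 + (x - 1)^3 h. Substituting x^c for x with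
  5 not dividing c permutes the primitive roots, so it keeps N_k(G), and it turns G into
  1 + (x - 1)^3 h' with h'(1) = c^3 h(1); as cubing permutes the units mod 5 we may assume
  h(1) = 1 resp. h(1) = -1 (mod 5). Now (x - 1)^4 is 5 times a unit modulo Phi_5 and
  Phi_5 times a unit modulo Phi_25, which yields F congruent to (1 - x) G modulo one of
  Phi_5, Phi_25 and to 1 - x modulo the other, with F(1) = 5. Finally N_k(1 - x) = Phi_(5^k)(1) = 5.
*)

theory Submission
  imports Defs "HOL-Computational_Algebra.Fundamental_Theorem_Algebra" "HOL-Number_Theory.Cong"
begin

lemma map_poly_of_int_add [simp]:
  "map_poly (of_int :: int \<Rightarrow> 'a::ring_1) (p + q) = map_poly of_int p + map_poly of_int q"
  by (rule poly_eqI) (simp add: coeff_map_poly)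

lemma map_poly_of_int_diff [simp]:
  "map_poly (of_int :: int \<Rightarrow> 'a::ring_1) (p - q) = map_poly of_int p - map_poly of_int q"
  by (rule poly_eqI) (simp add: coeff_map_poly)

lemma map_poly_of_int_mult [simp]:
  "map_poly (of_int :: int \<Rightarrow> 'a::comm_ring_1) (p * q) = map_poly of_int p * map_poly of_int q"
  by (rule poly_eqI) (simp add: coeff_map_poly coeff_mult)

lemma cpoly_add [simp]: "cpoly (p + q) z = cpoly p z + cpoly q z"
  by (simp add: cpoly_def)

lemma cpoly_diff [simp]: "cpoly (p - q) z = cpoly p z - cpoly q z"
  by (simp add: cpoly_def)

lemma cpoly_mult [simp]: "cpoly (p * q) z = cpoly p z * cpoly q z"
  by (simp add: cpoly_def)

lemma cpoly_pCons [simp]: "cpoly (pCons a p) z = of_int a + z * cpoly p z"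
  by (simp add: cpoly_def map_poly_pCons)

lemma cpoly_0 [simp]: "cpoly 0 z = 0"
  by (simp add: cpoly_def)

lemma cpoly_1 [simp]: "cpoly 1 z = 1"
  by (simp add: cpoly_def)

lemma cpoly_smult [simp]: "cpoly (smult a p) z = of_int a * cpoly p z"
  by (simp add: cpoly_def map_poly_smult)

lemma cpoly_power [simp]: "cpoly (p ^ n) z = cpoly p z ^ n"
  by (induction n) auto

lemma cpoly_monom [simp]: "cpoly (monom a n) z = of_int a * z ^ n"
  by (simp add: cpoly_def map_poly_monom poly_monom)

lemma cpoly_sum [simp]: "cpoly (\<Sum>i\<in>A. p i) z = (\<Sum>i\<in>A. cpoly (p i) z)"
  by (induction A rule: infinite_finite_induct) (auto simp: cpoly_def)

lemma cpoly_pcompose [simp]: "cpoly (pcompose p q) z = cpoly p (cpoly q z)"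
  by (induction p) (auto simp: pcompose_pCons)

lemma cpoly_at_1: "cpoly p 1 = of_int (poly p 1)"
  by (induction p) auto

lemma power_mod_order:
  fixes z :: "'a::monoid_mult"
  assumes "z ^ n = 1"
  shows "z ^ (m mod n) = z ^ m"
proof -
  have "z ^ m = z ^ (n * (m div n) + m mod n)"
    by simp
  also have "\<dots> = (z ^ n) ^ (m div n) * z ^ (m mod n)"
    by (simp only: power_add power_mult)
  finally show ?thesis
    using assms by simp
qed

lemma bij_betw_power_coprime:
  assumes "coprime c n"
  shows "bij_betw (\<lambda>z::'a::monoid_mult. z ^ c)
           {z. z ^ n = 1 \<and> z ^ a \<noteq> 1} {z. z ^ n = 1 \<and> z ^ a \<noteq> 1}"
proof -
  obtain d where cd: "[c * d = 1] (mod n)"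
    using cong_solve_coprime_nat[OF assms] by auto
  have inverse: "(z ^ c) ^ d = z" "(z ^ d) ^ c = z" if "z ^ n = 1" for z :: 'a
  proof -
    have "z ^ (c * d) = z"
      using power_mod_order[OF that, of "c * d"] power_mod_order[OF that, of 1] cd
      by (simp add: cong_def)
    then show "(z ^ c) ^ d = z" "(z ^ d) ^ c = z"
      by (simp_all add: mult.commute flip: power_mult)
  qed
  have power_commute: "(z ^ e) ^ n = (z ^ n) ^ e" for z :: 'a and e n
    by (simp add: mult.commute flip: power_mult)
  have maps: "(z ^ e) ^ n = 1 \<and> (z ^ e) ^ a \<noteq> 1"
    if "z ^ n = 1" "z ^ a \<noteq> 1" "(z ^ e) ^ f = z" for z :: 'a and e f
    using that power_commute by (metis power_one)
  show ?thesis
    by (rule bij_betwI[where g = "\<lambda>z. z ^ d"])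
       (use inverse maps[where e = c and f = d] maps[where e = d and f = c] in auto)
qed

lemma prod_roots_unity:
  assumes "n > 0"
  shows "(\<Prod>z\<in>{z::complex. z ^ n = 1}. [:-z, 1:]) = monom 1 n - 1"
proof -
  let ?p = "monom (1::complex) n - 1"
  have "degree ?p = n"
    using degree_add_eq_left[of "-1" "monom (1::complex) n"] assms by (simp add: degree_monom_eq)
  then have lead: "lead_coeff ?p = 1"
    using assms by simp
  have "rsquarefree ?p"
    unfolding rsquarefree_roots
  proof (intro allI notI)
    fix z assume "poly ?p z = 0 \<and> poly (pderiv ?p) z = 0"
    then have "z ^ n = 1" "of_nat n * z ^ (n - 1) = 0"
      by (auto simp: poly_monom pderiv_monom pderiv_diff)
    with assms show False
      by (cases "z = 0") (auto simp: power_0_left)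
  qed
  from complex_poly_decompose_rsquarefree[OF this] show ?thesis
    unfolding lead by (simp add: poly_monom)
qed

lemma prod_primitive_roots_unity:
  assumes "a > 0" "b > 0"
  shows "(\<Prod>z\<in>{z::complex. z ^ (a * b) = 1 \<and> z ^ a \<noteq> 1}. [:-z, 1:])
           = (\<Sum>i<b. monom 1 (a * i))"
proof -
  let ?R = "\<lambda>n. {z::complex. z ^ n = 1}"
  let ?D = "{z::complex. z ^ (a * b) = 1 \<and> z ^ a \<noteq> 1}"
  have fin: "finite (?R n)" if "n > 0" for n
    using that by (simp add: finite_roots_unity)
  have split: "?R (a * b) = ?R a \<union> ?D"
    by (auto simp: power_mult)
  have "(\<Prod>z\<in>?R (a * b). [:-z, 1:]) = (\<Prod>z\<in>?R a. [:-z, 1:]) * (\<Prod>z\<in>?D. [:-z, 1:])"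
    unfolding split using assms fin
    by (intro prod.union_disjoint) (auto intro: finite_subset[OF _ fin[of "a * b"]])
  then have "(monom 1 a - 1) * (\<Prod>z\<in>?D. [:-z, 1:]) = monom 1 a ^ b - 1"
    using assms by (simp add: prod_roots_unity monom_power mult.commute)
  also have "\<dots> = (monom 1 a - 1) * (\<Sum>i<b. monom 1 (a * i))"
    using power_diff_1_eq[of "monom (1::complex) a" b] by (simp add: monom_power mult.commute)
  finally show ?thesis
    using assms by (simp add: monom_eq_1_iff)
qed

definition prim_roots_5pow :: "nat \<Rightarrow> complex set" where
  "prim_roots_5pow k = {z. z ^ 5 ^ k = 1 \<and> z ^ 5 ^ (k - 1) \<noteq> 1}"

lemma finite_prim_roots_5pow [simp]: "finite (prim_roots_5pow k)"
  by (rule finite_subset[of _ "{z. z ^ 5 ^ k = 1}"])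
     (auto simp: prim_roots_5pow_def finite_roots_unity)

lemma omega_power: "omega k ^ j = exp (2 * of_real pi * \<i> * of_nat j / of_nat (5 ^ k))"
proof -
  have "omega k ^ j = exp (of_nat j * (2 * pi * \<i> / of_nat (5 ^ k)))"
    by (simp add: omega_def exp_of_nat_mult[symmetric])
  then show ?thesis
    by (simp add: field_simps)
qed

lemma bij_betw_omega_power:
  assumes "k \<ge> 1"
  shows "bij_betw (\<lambda>j. omega k ^ j) {j\<in>{1..5 ^ k}. \<not> 5 dvd j} (prim_roots_5pow k)"
proof -
  have five_pow: "(5::nat) ^ k = 5 * 5 ^ (k - 1)"
    using assms by (cases k) auto
  have power_eq_1: "(omega k ^ j) ^ 5 ^ (k - 1) = 1 \<longleftrightarrow> 5 dvd j" for j
  proof -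
    have "(omega k ^ j) ^ 5 ^ (k - 1) = omega k ^ (j * 5 ^ (k - 1))"
      by (simp add: power_mult)
    also have "\<dots> = 1 \<longleftrightarrow> 5 ^ k dvd j * 5 ^ (k - 1)"
      unfolding omega_power by (rule complex_root_unity_eq_1) simp
    also have "\<dots> \<longleftrightarrow> 5 dvd j"
      unfolding five_pow by simp
    finally show ?thesis .
  qed
  have "inj_on (\<lambda>j. omega k ^ j) {j\<in>{1..5 ^ k}. \<not> 5 dvd j}"
  proof (rule inj_onI)
    fix i j assume "i \<in> {j\<in>{1..5 ^ k}. \<not> 5 dvd j}" "j \<in> {j\<in>{1..5 ^ k}. \<not> 5 dvd j}"
      and "omega k ^ i = omega k ^ j"
    moreover have "i \<noteq> 5 ^ k" "j \<noteq> 5 ^ k"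
      using calculation(1,2) five_pow by auto
    ultimately show "i = j"
      unfolding omega_power by (subst (asm) complex_root_unity_eq) auto
  qed
  moreover have "(\<lambda>j. omega k ^ j) ` {j\<in>{1..5 ^ k}. \<not> 5 dvd j} = prim_roots_5pow k"
  proof (intro equalityI subsetI)
    fix z assume "z \<in> (\<lambda>j. omega k ^ j) ` {j\<in>{1..5 ^ k}. \<not> 5 dvd j}"
    then obtain j where "\<not> 5 dvd j" "z = omega k ^ j"
      by auto
    moreover have "(omega k ^ j) ^ 5 ^ k = 1"
      unfolding omega_power by (rule complex_root_unity) simp
    ultimately show "z \<in> prim_roots_5pow k"
      using power_eq_1 by (simp add: prim_roots_5pow_def)
  next
    fix z assume z: "z \<in> prim_roots_5pow k"
    then have "z \<in> {z. z ^ 5 ^ k = 1}"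
      by (simp add: prim_roots_5pow_def)
    then obtain j where "j < 5 ^ k" "z = omega k ^ j"
      by (subst (asm) complex_roots_unity) (auto simp: omega_power)
    moreover have "\<not> 5 dvd j"
      using z power_eq_1 calculation(2) by (simp add: prim_roots_5pow_def)
    moreover from this have "j \<ge> 1"
      by (cases j) auto
    ultimately show "z \<in> (\<lambda>j. omega k ^ j) ` {j\<in>{1..5 ^ k}. \<not> 5 dvd j}"
      by (intro image_eqI[of _ _ j]) auto
  qed
  ultimately show ?thesis
    unfolding bij_betw_def ..
qed

lemma Nk_eq_prod_prim_roots: "k \<ge> 1 \<Longrightarrow> Nk k F = (\<Prod>z\<in>prim_roots_5pow k. cpoly F z)"
  unfolding Nk_def by (rule prod.reindex_bij_betw[OF bij_betw_omega_power])

lemma M25_eq: "M25 F = cpoly F 1 * Nk 1 F * Nk 2 F"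
proof -
  have pow25: "z ^ 25 = 1" if "z ^ 5 = 1" for z :: complex
  proof -
    have "z ^ 25 = (z ^ 5) ^ 5"
      by (simp flip: power_mult)
    with that show ?thesis
      by simp
  qed
  have roots25: "{z::complex. z ^ 25 = 1} = insert 1 (prim_roots_5pow 1 \<union> prim_roots_5pow 2)"
    by (auto simp: prim_roots_5pow_def intro: pow25)
  have "prim_roots_5pow 1 \<inter> prim_roots_5pow 2 = {}" "1 \<notin> prim_roots_5pow 1 \<union> prim_roots_5pow 2"
    by (auto simp: prim_roots_5pow_def)
  then show ?thesis
    by (simp add: M25_def roots25 prod.union_disjoint Nk_eq_prod_prim_roots)
qed

text \<open>This is \<open>\<Phi>\<^bsub>5^k\<^esub>\<close> only for \<open>k \<ge> 1\<close>: the truncated \<open>k - 1\<close> makes it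
  \<open>\<Phi>\<^sub>5\<close> for \<open>k = 0\<close>.\<close>
definition cyclotomic_5pow :: "nat \<Rightarrow> int poly" where
  "cyclotomic_5pow k = (\<Sum>i<5. monom 1 (5 ^ (k - 1) * i))"

lemma cpoly_cyclotomic_5pow:
  assumes "k \<ge> 1"
  shows "cpoly (cyclotomic_5pow k) z = (\<Prod>w\<in>prim_roots_5pow k. z - w)"
proof -
  have "prim_roots_5pow k = {w. w ^ (5 ^ (k - 1) * 5) = 1 \<and> w ^ 5 ^ (k - 1) \<noteq> 1}"
    using assms by (cases k) (auto simp: prim_roots_5pow_def mult.commute)
  then have "(\<Prod>w\<in>prim_roots_5pow k. [:-w, 1:]) = (\<Sum>i<5. monom 1 (5 ^ (k - 1) * i))"
    by (simp add: prod_primitive_roots_unity)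
  from arg_cong[where f = "\<lambda>p. poly p z", OF this] show ?thesis
    by (simp add: cyclotomic_5pow_def poly_prod poly_sum poly_monom)
qed

lemma cpoly_cyclotomic_5pow_eq_0:
  "k \<ge> 1 \<Longrightarrow> z \<in> prim_roots_5pow k \<Longrightarrow> cpoly (cyclotomic_5pow k) z = 0"
  by (simp add: cpoly_cyclotomic_5pow)

lemma poly_cyclotomic_5pow_1: "poly (cyclotomic_5pow k) 1 = 5"
  by (simp add: cyclotomic_5pow_def poly_sum poly_monom)

lemma Nk_eq_5_mult:
  assumes "k \<ge> 1" and "\<And>z. z \<in> prim_roots_5pow k \<Longrightarrow> cpoly F z = (1 - z) * cpoly G z"
  shows "Nk k F = 5 * Nk k G"
proof -
  have "(\<Prod>z\<in>prim_roots_5pow k. 1 - z) = cpoly (cyclotomic_5pow k) 1"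
    using assms(1) by (simp add: cpoly_cyclotomic_5pow)
  also have "\<dots> = 5"
    by (simp add: cpoly_at_1 poly_cyclotomic_5pow_1)
  finally show ?thesis
    using assms by (simp add: Nk_eq_prod_prim_roots prod.distrib)
qed

lemma Nk_eq_5:
  assumes "k \<ge> 1" and "\<And>z. z \<in> prim_roots_5pow k \<Longrightarrow> cpoly F z = 1 - z"
  shows "Nk k F = 5"
  using Nk_eq_5_mult[of k F 1] assms by (simp add: Nk_def)

lemma Nk_pcompose_power_X:
  assumes "k \<ge> 1" and "coprime c 5"
  shows "Nk k (pcompose G ([:0, 1:] ^ c)) = Nk k G"
proof -
  have "bij_betw (\<lambda>z. z ^ c) (prim_roots_5pow k) (prim_roots_5pow k)"
    unfolding prim_roots_5pow_def using assms(2) by (intro bij_betw_power_coprime) simp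
  from prod.reindex_bij_betw[OF this] assms(1) show ?thesis
    by (simp add: Nk_eq_prod_prim_roots)
qed

lemma pcompose_power_left: "pcompose (p ^ n) q = pcompose p q ^ n"
  for p q :: "'a::comm_semiring_1 poly"
  by (induction n) (simp_all add: pcompose_1 pcompose_mult)

lemma pcompose_power_X_one_plus_cube:
  "pcompose (1 + [:-1, 1:] ^ 3 * h) ([:0, 1:] ^ c)
     = 1 + [:-1, 1:] ^ 3 * ((\<Sum>i<c. [:0, 1:] ^ i) ^ 3 * pcompose h ([:0, 1:] ^ c))"
  for h :: "'a::comm_ring_1 poly"
proof -
  have "pcompose [:-1, 1:] ([:0, 1:] ^ c) = [:0, 1:] ^ c - (1 :: 'a poly)"
    by (simp add: pcompose_pCons one_pCons)
  also have "\<dots> = ([:0, 1:] - 1) * (\<Sum>i<c. [:0, 1:] ^ i)"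
    by (rule power_diff_1_eq)
  also have "[:0, 1:] - 1 = ([:-1, 1:] :: 'a poly)"
    by (simp add: one_pCons)
  finally have X_power_minus_1:
    "pcompose [:-1, 1:] ([:0, 1:] ^ c) = [:-1, 1:] * (\<Sum>i<c. [:0, 1:] ^ i :: 'a poly)" .
  show ?thesis
    unfolding pcompose_add pcompose_mult pcompose_power_left pcompose_1 X_power_minus_1
    by (simp only: power_mult_distrib mult.assoc)
qed

lemma exists_cube_factor_mod_5:
  fixes a r :: int
  assumes "\<not> 5 dvd a" "\<not> 5 dvd r"
  obtains c :: nat where "coprime c 5" "[int c ^ 3 * a = r] (mod 5)"
proof -
  \<comment> \<open>\<open>(a r^3)^3 a = a^4 r^9 \<equiv> r\<close>, as fourth powers of units are \<open>1\<close> mod 5\<close>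
  define c where "c = nat ((a * r ^ 3) mod 5)"
  have residues: "a mod 5 \<in> {1, 2, 3, 4}" "r mod 5 \<in> {1, 2, 3, 4}"
    using assms by (simp_all, presburger+)
  have "[int c = a * r ^ 3] (mod 5)"
    by (simp add: c_def cong_def)
  then have "[int c ^ 3 * a = (a * r ^ 3) ^ 3 * a] (mod 5)"
    by (intro cong_mult cong_pow cong_refl)
  also have "(a * r ^ 3) ^ 3 * a = a ^ 4 * r ^ 9"
    by algebra
  also have "[a ^ 4 * r ^ 9 = (a mod 5) ^ 4 * (r mod 5) ^ 9] (mod 5)"
    by (intro cong_mult cong_pow) (simp_all add: cong_def)
  also have "[(a mod 5) ^ 4 * (r mod 5) ^ 9 = r] (mod 5)"
    using residues unfolding cong_def by auto
  finally have c: "[int c ^ 3 * a = r] (mod 5)" .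
  have "\<not> 5 dvd c"
  proof
    assume "5 dvd c"
    then have "5 dvd int c ^ 3 * a"
      by (auto simp: power3_eq_cube)
    with c assms(2) show False
      using cong_dvd_iff by blast
  qed
  then have "coprime c 5"
    using prime_imp_coprime[of "5::nat" c] by (simp add: coprime_commute)
  then show thesis
    using c by (rule that)
qed

lemma Nk_one_plus_cube_normalize:
  assumes "k \<ge> 1" "\<not> 5 dvd poly h 1" "\<not> 5 dvd r"
  obtains h' where "[poly h' 1 = r] (mod 5)"
    "Nk k (1 + [:-1, 1:] ^ 3 * h') = Nk k (1 + [:-1, 1:] ^ 3 * h)"
proof -
  obtain c where c: "coprime c 5" "[int c ^ 3 * poly h 1 = r] (mod 5)"
    using exists_cube_factor_mod_5 assms(2,3) by blast
  define h' where "h' = (\<Sum>i<c. [:0, 1:] ^ i) ^ 3 * pcompose h ([:0, 1:] ^ c)"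
  have "poly h' 1 = int c ^ 3 * poly h 1"
    by (simp add: h'_def poly_sum poly_pcompose)
  moreover have "Nk k (1 + [:-1, 1:] ^ 3 * h') = Nk k (1 + [:-1, 1:] ^ 3 * h)"
    using Nk_pcompose_power_X[OF assms(1) c(1), of "1 + [:-1, 1:] ^ 3 * h"]
    unfolding h'_def pcompose_power_X_one_plus_cube .
  ultimately show thesis
    using c(2) by (intro that[of h']) simp_all
qed

lemma cyclotomic_5pow_1_eq: "cyclotomic_5pow 1 = [:-1, 1:] ^ 4 + [:5:] * [:0, 1, -1, 1:]"
  by (rule poly_eq_poly_eq_iff[THEN iffD1], rule ext)
     (simp add: cyclotomic_5pow_def poly_sum poly_monom eval_nat_numeral algebra_simps)

text \<open>The last factor \<open>Q\<close> satisfies \<open>(x^5 - 1) Q = \<Phi>\<^sub>2\<^sub>5 - 5\<close>; together with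
  \<open>\<Phi>\<^sub>5 = (x - 1)^4 + 5 t\<close>, \<open>t = x - x^2 + x^3\<close>, this gives the identity below.\<close>
definition unit25 :: "int poly" where
  "unit25 = 1 + [:0, 1, -1, 1:] * [:-1, 1:] * (monom 1 15 + monom 2 10 + monom 3 5 + 4)"

lemma cyclotomic_5pow_1_mult_unit25:
  "cyclotomic_5pow 1 * unit25 = [:-1, 1:] ^ 4 + [:0, 1, -1, 1:] * cyclotomic_5pow 2"
  by (rule poly_eq_poly_eq_iff[THEN iffD1], rule ext)
     (simp add: cyclotomic_5pow_def unit25_def poly_sum poly_monom eval_nat_numeral algebra_simps)

lemma cpoly_cyclotomic_5pow_2_prim_roots_1:
  "z \<in> prim_roots_5pow 1 \<Longrightarrow> cpoly (cyclotomic_5pow 2) z = 5"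
  by (simp add: cyclotomic_5pow_def prim_roots_5pow_def power_mult)

lemma exists_poly_Nk1_eq_5_mult:
  assumes "[poly h 1 = 1] (mod 5)"
  obtains F :: "int poly"
    where "poly F 1 = 5" "Nk 1 F = 5 * Nk 1 (1 + [:-1, 1:] ^ 3 * h)" "Nk 2 F = 5"
proof -
  obtain k where k: "1 = poly h 1 + 5 * k"
    using assms by (auto simp: cong_iff_lin)
  define F where
    "F = [:1, -1:] + cyclotomic_5pow 2 * ([:0, 1, -1, 1:] * h + [:k:] * cyclotomic_5pow 1)"
  have "poly F 1 = 5"
    using k by (simp add: F_def poly_cyclotomic_5pow_1)
  moreover have "Nk 1 F = 5 * Nk 1 (1 + [:-1, 1:] ^ 3 * h)"
  proof (rule Nk_eq_5_mult)
    fix z assume z: "z \<in> prim_roots_5pow 1"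
    have "cpoly (cyclotomic_5pow 1) z = 0"
      using z by (simp add: cpoly_cyclotomic_5pow_eq_0)
    then have "(z - 1) ^ 4 + 5 * (z * (1 + z * (z - 1))) = 0"
      unfolding cyclotomic_5pow_1_eq by (simp add: algebra_simps)
    with z show "cpoly F z = (1 - z) * cpoly (1 + [:-1, 1:] ^ 3 * h) z"
      by (simp add: F_def cpoly_cyclotomic_5pow_2_prim_roots_1 cpoly_cyclotomic_5pow_eq_0) algebra
  qed simp
  moreover have "Nk 2 F = 5"
    by (rule Nk_eq_5) (simp_all add: F_def cpoly_cyclotomic_5pow_eq_0)
  ultimately show thesis
    by (rule that)
qed

lemma exists_poly_Nk2_eq_5_mult:
  assumes "[poly h 1 = -1] (mod 5)"
  obtains F :: "int poly"
    where "poly F 1 = 5" "Nk 1 F = 5" "Nk 2 F = 5 * Nk 2 (1 + [:-1, 1:] ^ 3 * h)"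
proof -
  obtain k where k: "-1 = poly h 1 + 5 * k"
    using assms by (auto simp: cong_iff_lin)
  define F where "F = [:1, -1:] - cyclotomic_5pow 1 * (unit25 * h + [:k:] * cyclotomic_5pow 2)"
  have "poly unit25 1 = 1"
    by (simp add: unit25_def poly_monom)
  then have "poly F 1 = 5"
    using k by (simp add: F_def poly_cyclotomic_5pow_1)
  moreover have "Nk 1 F = 5"
    by (rule Nk_eq_5) (simp_all add: F_def cpoly_cyclotomic_5pow_eq_0)
  moreover have "Nk 2 F = 5 * Nk 2 (1 + [:-1, 1:] ^ 3 * h)"
  proof (rule Nk_eq_5_mult)
    fix z assume z: "z \<in> prim_roots_5pow 2"
    have "cpoly (cyclotomic_5pow 2) z = 0"
      using z by (simp add: cpoly_cyclotomic_5pow_eq_0)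
    then have "cpoly (cyclotomic_5pow 1) z * cpoly unit25 z = (z - 1) ^ 4"
      using arg_cong[where f = "\<lambda>p. cpoly p z", OF cyclotomic_5pow_1_mult_unit25] by simp
    with z show "cpoly F z = (1 - z) * cpoly (1 + [:-1, 1:] ^ 3 * h) z"
      by (simp add: F_def cpoly_cyclotomic_5pow_eq_0) algebra
  qed simp
  ultimately show thesis
    by (rule that)
qed

theorem lemma3p4:
  fixes m :: int
  shows "((\<exists>h :: int poly. \<not> (5::int) dvd poly h 1 \<and>
             of_int m = Nk 1 (1 + [:-1, 1:] ^ 3 * h))
          \<longrightarrow> (\<exists>F :: int poly. M25 F = of_int (5 ^ 3 * m) \<and> poly F 1 = 5 \<and>
                 Nk 2 F = 5 \<and> Nk 1 F = of_int (5 * m)))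
       \<and> ((\<exists>h :: int poly. \<not> (5::int) dvd poly h 1 \<and>
             of_int m = Nk 2 (1 + [:-1, 1:] ^ 3 * h))
          \<longrightarrow> (\<exists>F :: int poly. M25 F = of_int (5 ^ 3 * m) \<and> poly F 1 = 5 \<and>
                 Nk 1 F = 5 \<and> Nk 2 F = of_int (5 * m)))"
proof (intro conjI impI; elim exE conjE)
  fix h :: "int poly"
  assume h: "\<not> 5 dvd poly h 1" and m: "of_int m = Nk 1 (1 + [:-1, 1:] ^ 3 * h)"
  obtain h' where "[poly h' 1 = 1] (mod 5)" "Nk 1 (1 + [:-1, 1:] ^ 3 * h') = of_int m"
    using Nk_one_plus_cube_normalize[of 1 h 1] h m by auto
  then obtain F where "poly F 1 = 5" "Nk 1 F = 5 * of_int m" "Nk 2 F = 5"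
    by (metis exists_poly_Nk1_eq_5_mult)
  then show
    "\<exists>F. M25 F = of_int (5 ^ 3 * m) \<and> poly F 1 = 5 \<and> Nk 2 F = 5 \<and> Nk 1 F = of_int (5 * m)"
    by (intro exI[of _ F]) (simp add: M25_eq cpoly_at_1)
next
  fix h :: "int poly"
  assume h: "\<not> 5 dvd poly h 1" and m: "of_int m = Nk 2 (1 + [:-1, 1:] ^ 3 * h)"
  obtain h' where "[poly h' 1 = -1] (mod 5)" "Nk 2 (1 + [:-1, 1:] ^ 3 * h') = of_int m"
    using Nk_one_plus_cube_normalize[of 2 h "-1"] h m by auto
  then obtain F where "poly F 1 = 5" "Nk 1 F = 5" "Nk 2 F = 5 * of_int m"
    by (metis exists_poly_Nk2_eq_5_mult)
  then show
    "\<exists>F. M25 F = of_int (5 ^ 3 * m) \<and> poly F 1 = 5 \<and> Nk 1 F = 5 \<and> Nk 2 F = of_int (5 * m)"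
    by (intro exI[of _ F]) (simp add: M25_eq cpoly_at_1)
qed

end
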